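(* Let $w,u$ be integers with $w/2 \le u < w$, fix a sign, and let $q = 2^w - 2^u \pm 1$. Let $\lambda$ be a positive integer that is an integer multiple of $q$. Define $c = \lfloor \lambda / 2^w \rfloor$ and, for integers $x$, $$v(x) = \left\lfloor -\frac{x(2^u \mp 1)}{2^w} \right\rfloor, \qquad f(x) = x + v(x),$$ where $\mp$ is the sign opposite to the one chosen in $q$, so that $q = 2^w - (2^u \mp 1)$. Define the sequence $b_0 = c$ and $b_{i+1} = b_i + (c - f(b_i))$ for $i \ge 0$. Then there exists a finite $i \ge 0$ with $f(b_i) = c$. In other words, the loop "while $f(b_i)\neq c$: $b_{i+1}\gets b_i + (c-f(b_i))$" started from $b_0=c$ terminates after finitely many iterations.
   Context: This is the iterative part of a division algorithm ("Algorithm 1"). Its input is $\lambda$ and $q = 2^w - 2^u \pm 1$. It sets $c \gets \lfloor \lambda/2^w \rfloor$ and $b_0 \gets c$. While $f(b_i) \neq c$, it sets $b_{i+1} \gets b_i + (c - f(b_i))$. The last $b_i$ computed is called $b^*$. It then outputs $b = b^* + (\mathrm{LSB}(\lambda) \ \mathrm{XOR}\ \mathrm{LSB}(b^* ))$, where $\mathrm{LSB}$ denotes the least significant bit. *)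

theory Defs
  imports Complex_Main
begin

text \<open>Sign s \<in> {1,-1}; q = 2^w - 2^u + s, and d = 2^u - s, so q = 2^w - d.\<close>

definition modq :: "nat \<Rightarrow> nat \<Rightarrow> int \<Rightarrow> int" where
  "modq w u s = 2^w - 2^u + s"

definition vfun :: "nat \<Rightarrow> nat \<Rightarrow> int \<Rightarrow> int \<Rightarrow> int" where
  "vfun w u s x = \<lfloor>(-(of_int x * (2^u - of_int s)) / 2^w :: real)\<rfloor>"

definition ffun :: "nat \<Rightarrow> nat \<Rightarrow> int \<Rightarrow> int \<Rightarrow> int" where
  "ffun w u s x = x + vfun w u s x"

fun bseq :: "nat \<Rightarrow> nat \<Rightarrow> int \<Rightarrow> int \<Rightarrow> nat \<Rightarrow> int" where
  "bseq w u s c 0 = c"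
| "bseq w u s c (Suc i) = bseq w u s c i + (c - ffun w u s (bseq w u s c i))"

end

theory Submission
  imports Defs
begin

text \<open>
  Write \<open>d = 2^u - s\<close>, so that \<open>f x = x + \<lfloor>-x d / 2^w\<rfloor>\<close> with \<open>0 \<le> d < 2^w\<close>.
  Since \<open>d \<ge> 0\<close>, the correction term is antitone, hence \<open>f (x + n) \<le> f x + n\<close> for
  \<open>n \<ge> 0\<close>: starting from \<open>f c \<le> c\<close>, every step keeps \<open>f (b\<^sub>i) \<le> c\<close> and, as long
  as \<open>f (b\<^sub>i) \<noteq> c\<close>, increases \<open>b\<^sub>i\<close> by at least one. Since \<open>d < 2^w\<close>, \<open>f\<close> grows
  like \<open>x (2^w - d) / 2^w\<close>, so \<open>f x \<le> c\<close> forces \<open>x < 2^w (c + 1)\<close>, and the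
  increasing sequence must stop. Termination does not need \<open>q\<close> to divide \<open>\<lambda>\<close>; that
  hypothesis only matters for the correctness of the algorithm's output.
\<close>

lemma correction_iteration_terminates:
  fixes f :: "int \<Rightarrow> int" and b :: "nat \<Rightarrow> int" and c B :: int
  assumes shift_le: "\<And>x n. 0 \<le> n \<Longrightarrow> f (x + n) \<le> f x + n"
    and start: "f (b 0) \<le> c"
    and step: "\<And>i. b (Suc i) = b i + (c - f (b i))"
    and bounded: "\<And>x. f x \<le> c \<Longrightarrow> x < B"
  shows "\<exists>i. f (b i) = c"
proof (rule ccontr)
  assume miss: "\<nexists>i. f (b i) = c"
  have invariant: "f (b i) \<le> c \<and> b 0 + int i \<le> b i" for i
  proof (induction i)
    case 0
    show ?case using start by simp
  next
    case (Suc i)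
    have "f (b i) \<noteq> c" using miss by blast
    with Suc have gap: "1 \<le> c - f (b i)" by linarith
    have "f (b (Suc i)) \<le> f (b i) + (c - f (b i))"
      unfolding step using gap by (intro shift_le) simp
    with Suc gap show ?case by (simp add: step)
  qed
  then have "b 0 + int (nat (B - b 0)) \<le> b (nat (B - b 0))" and "b (nat (B - b 0)) < B"
    using bounded by blast+
  then show False by linarith
qed

lemma ffun_eq_div:
  "ffun w u s x = x + (- (x * (2^u - s))) div 2^w"
proof -
  have "(- (of_int x * (2^u - of_int s)) / 2^w :: real)
        = of_int (- (x * (2^u - s))) / of_int (2^w)" by simp
  then show ?thesis
    unfolding ffun_def vfun_def by (simp only: floor_divide_of_int_eq)
qed

lemma ffun_add_le:
  assumes "0 \<le> 2^u - s" and "0 \<le> n"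
  shows "ffun w u s (x + n) \<le> ffun w u s x + n"
proof -
  have "0 \<le> n * (2^u - s)" using assms by simp
  then have "- ((x + n) * (2^u - s)) \<le> - (x * (2^u - s))"
    by (simp add: algebra_simps)
  then have "(- ((x + n) * (2^u - s))) div 2^w \<le> (- (x * (2^u - s))) div 2^w"
    by (rule zdiv_mono1) simp
  then show ?thesis unfolding ffun_eq_div by simp
qed

lemma ffun_le_self:
  assumes "0 \<le> 2^u - s" and "0 \<le> x"
  shows "ffun w u s x \<le> x"
proof -
  have "(- (x * (2^u - s))) div 2^w \<le> 0"
    using assms by (simp add: div_nonpos_pos_le0)
  then show ?thesis unfolding ffun_eq_div by simp
qed

lemma ffun_le_imp_less:
  assumes "2^u - s < 2^w" and "0 \<le> c" and "ffun w u s x \<le> c"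
  shows "x < 2^w * (c + 1)"
proof (cases "x < 0")
  case True
  have "0 < (2::int)^w * (c + 1)" using assms(2) by simp
  with True show ?thesis by linarith
next
  case False
  define P d :: int where "P = 2^w" and "d = 2^u - s"
  have "P > 0" unfolding P_def by simp
  then have "(- (x * d)) mod P < P" by simp
  then have "- (x * d) < P * ((- (x * d)) div P) + P"
    using mult_div_mod_eq[of P "- (x * d)"] by linarith
  then have "x * (P - d) < P * ffun w u s x + P"
    unfolding ffun_eq_div P_def d_def by (simp add: algebra_simps)
  moreover have "P * ffun w u s x \<le> P * c"
    using assms(3) \<open>P > 0\<close> by simp
  moreover have "x \<le> x * (P - d)"
    using False assms(1) unfolding P_def d_def by (simp add: mult_le_cancel_left1)
  ultimately have "x < P * c + P" by linarith
  then show ?thesis unfolding P_def by (simp add: algebra_simps)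
qed

lemma modq_offset_bounds:
  assumes "0 < u" and "u < w" and "s = 1 \<or> s = -1"
  shows "0 \<le> (2::int)^u - s" and "(2::int)^u - s < 2^w"
proof -
  have "(2::int)^1 \<le> 2^u" using assms(1) by (intro power_increasing) auto
  moreover have "(2::int)^Suc u \<le> 2^w" using assms(2) by (intro power_increasing) auto
  ultimately show "0 \<le> (2::int)^u - s" and "(2::int)^u - s < 2^w"
    using assms(3) by auto
qed

theorem theorem1:
  fixes w u :: nat and s lam :: int
  assumes "w \<le> 2 * u" and "u < w"
    and "s = 1 \<or> s = -1"
    and "lam > 0" and "modq w u s dvd lam"
  shows "\<exists>i. ffun w u s (bseq w u s \<lfloor>(of_int lam / 2^w :: real)\<rfloor> i)
             = \<lfloor>(of_int lam / 2^w :: real)\<rfloor>"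
proof -
  define c where "c = \<lfloor>(of_int lam / 2^w :: real)\<rfloor>"
  have c_nonneg: "0 \<le> c" unfolding c_def using assms(4) by simp
  have "0 < u" using assms(1,2) by linarith
  note d_bounds = modq_offset_bounds[OF this assms(2,3)]
  have "\<exists>i. ffun w u s (bseq w u s c i) = c"
  proof (rule correction_iteration_terminates
      [where f = "ffun w u s" and b = "bseq w u s c" and B = "2^w * (c + 1)"])
    show "ffun w u s (x + n) \<le> ffun w u s x + n" if "0 \<le> n" for x n
      using ffun_add_le d_bounds(1) that by blast
    show "ffun w u s (bseq w u s c 0) \<le> c"
      using ffun_le_self d_bounds(1) c_nonneg by simp
    show "bseq w u s c (Suc i) = bseq w u s c i + (c - ffun w u s (bseq w u s c i))" for i
      by simp
    show "x < 2^w * (c + 1)" if "ffun w u s x \<le> c" for x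
      using ffun_le_imp_less d_bounds(2) c_nonneg that by blast
  qed
  then show ?thesis unfolding c_def .
qed

end
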